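(* (a) For every natural number $n\geq1$, the powers $\mathcal{R}_{\mathcal{S}}^{\,n}$ and $\mathcal{I}_{\mathcal{S}}^{\,n}$ have a $\pi$-tree. (b) The countable powers $\mathcal{R}_{\mathcal{S}}^{\,\omega}$ and $\mathcal{I}_{\mathcal{S}}^{\,\omega}$ have a $\pi$-tree.
   Context: $\mathcal{R}_{\mathcal{S}}$ is the Sorgenfrey line (reals with the topology generated by $[a,b)$); $\mathcal{I}_{\mathcal{S}}=\mathcal{R}_{\mathcal{S}}\setminus\mathbb{Q}$ is the irrational Sorgenfrey line (subspace). Powers carry the Tychonoff product topology. Neighbourhoods are not necessarily open. ${}^{<\omega}\omega$ is the set of finite sequences of natural numbers. A tree is a strict partial order in which the set of predecessors of every node is well-ordered; a branch is a maximal chain; $\mathrm{sons}(x)$ is the set of immediate successors of $x$; $0$ denotes the least node. A foliage tree is a pair $\mathbf{F}=(T,l)$ with $T$ a tree (skeleton) and $l$ a function on its nodes, $\mathbf{F}_x:=l(x)$; tree notions apply via the skeleton. $\mathrm{shoot}_{\mathbf{F}}(v)=\{\bigcup_{x\in C}\mathbf{F}_x: C\text{ a cofinite subset of }\mathrm{sons}_{\mathbf{F}}(v)\}$; $\mathrm{scope}_{\mathbf{F}}(p)=\{x:p\in\mathbf{F}_x\}$. $\gamma\gg\delta$ means every nonempty $D\in\delta$ contains some nonempty $G\in\gamma$. $\mathbf{F}$ is locally strict if each non-maximal leaf $\mathbf{F}_x$ is the disjoint union of $\mathbf{F}_s$, $s\in\mathrm{sons}(x)$; has strict branches if it has a node and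 for each branch $B$, $\bigcap_{x\in B}\mathbf{F}_x$ is a singleton; is open in $X$ if all leaves are open in $X$; is a foliage $\omega,\omega$-tree if its skeleton is order-isomorphic to $({}^{<\omega}\omega,\subsetneq)$. A Baire foliage tree on $X$ is an open in $X$, locally strict foliage $\omega,\omega$-tree with strict branches and $\mathbf{F}_{0_{\mathbf{F}}}=X$. $\mathbf{F}$ grows into $X$ if for every $p\in X$ and neighbourhood $U$ of $p$ there is $z\in\mathrm{scope}_{\mathbf{F}}(p)$ with $\mathrm{shoot}_{\mathbf{F}}(z)\gg\{U\}$. A $\pi$-tree on $X$ is a Baire foliage tree on $X$ that grows into $X$; a space has a $\pi$-tree if there is one on it. *)

theory Defs
  imports "HOL-Analysis.Analysis" "HOL-Library.Sublist"
begin

definition sorgenfrey_line :: "real topology" where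
  "sorgenfrey_line = topology_generated_by {{a..<b} | a b. a < b}"

definition irrational_sorgenfrey_line :: "real topology" where
  "irrational_sorgenfrey_line = subtopology sorgenfrey_line (- \<rat>)"

definition fin_power :: "'a topology \<Rightarrow> nat \<Rightarrow> (nat \<Rightarrow> 'a) topology" where
  "fin_power X n = product_topology (\<lambda>_. X) {..<n}"

definition omega_power :: "'a topology \<Rightarrow> (nat \<Rightarrow> 'a) topology" where
  "omega_power X = product_topology (\<lambda>_. X) (UNIV :: nat set)"

text \<open>A foliage omega,omega-tree is represented with skeleton literally equal to
  the finite sequences of naturals, ordered by strict extension (strict prefix);
  the leaf labelling is F.\<close>

definition sons :: "nat list \<Rightarrow> nat list set" where
  "sons v = {v @ [k] | k. True}"

definition tree_chain :: "nat list set \<Rightarrow> bool" where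
  "tree_chain B \<longleftrightarrow> (\<forall>x\<in>B. \<forall>y\<in>B. x = y \<or> strict_prefix x y \<or> strict_prefix y x)"

definition branch :: "nat list set \<Rightarrow> bool" where
  "branch B \<longleftrightarrow> tree_chain B \<and> (\<forall>C. tree_chain C \<and> B \<subseteq> C \<longrightarrow> C = B)"

definition shoot :: "(nat list \<Rightarrow> 'a set) \<Rightarrow> nat list \<Rightarrow> 'a set set" where
  "shoot F v = {\<Union>x\<in>C. F x | C. C \<subseteq> sons v \<and> finite (sons v - C)}"

definition scope :: "(nat list \<Rightarrow> 'a set) \<Rightarrow> 'a \<Rightarrow> nat list set" where
  "scope F p = {x. p \<in> F x}"

definition refines :: "'a set set \<Rightarrow> 'a set set \<Rightarrow> bool" (infix "\<ggreater>" 50) where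
  "\<gamma> \<ggreater> \<delta> \<longleftrightarrow> (\<forall>D\<in>\<delta>. D \<noteq> {} \<longrightarrow> (\<exists>G\<in>\<gamma>. G \<noteq> {} \<and> G \<subseteq> D))"

definition locally_strict :: "(nat list \<Rightarrow> 'a set) \<Rightarrow> bool" where
  "locally_strict F \<longleftrightarrow>
     (\<forall>x. sons x \<noteq> {} \<longrightarrow> F x = (\<Union>s\<in>sons x. F s) \<and> disjoint_family_on F (sons x))"

definition strict_branches :: "(nat list \<Rightarrow> 'a set) \<Rightarrow> bool" where
  "strict_branches F \<longleftrightarrow> (\<forall>B. branch B \<longrightarrow> (\<exists>p. (\<Inter>x\<in>B. F x) = {p}))"

definition open_foliage :: "'a topology \<Rightarrow> (nat list \<Rightarrow> 'a set) \<Rightarrow> bool" where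
  "open_foliage X F \<longleftrightarrow> (\<forall>x. openin X (F x))"

definition baire_foliage_tree :: "'a topology \<Rightarrow> (nat list \<Rightarrow> 'a set) \<Rightarrow> bool" where
  "baire_foliage_tree X F \<longleftrightarrow>
     open_foliage X F \<and> locally_strict F \<and> strict_branches F \<and> F [] = topspace X"

definition neighbourhood :: "'a topology \<Rightarrow> 'a set \<Rightarrow> 'a \<Rightarrow> bool" where
  "neighbourhood X U p \<longleftrightarrow> U \<subseteq> topspace X \<and> (\<exists>V. openin X V \<and> p \<in> V \<and> V \<subseteq> U)"

definition grows_into :: "'a topology \<Rightarrow> (nat list \<Rightarrow> 'a set) \<Rightarrow> bool" where
  "grows_into X F \<longleftrightarrow>
     (\<forall>p\<in>topspace X. \<forall>U. neighbourhood X U p \<longrightarrow> (\<exists>z\<in>scope F p. shoot F z \<ggreater> {U}))"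

definition pi_tree :: "'a topology \<Rightarrow> (nat list \<Rightarrow> 'a set) \<Rightarrow> bool" where
  "pi_tree X F \<longleftrightarrow> baire_foliage_tree X F \<and> grows_into X F"

definition has_pi_tree :: "'a topology \<Rightarrow> bool" where
  "has_pi_tree X \<longleftrightarrow> (\<exists>F. pi_tree X F)"

end

theory Submission
  imports Defs
begin

text \<open>The leaves of the tree are boxes \<open>\<Prod>\<^sub>j [a\<^sub>j, b\<^sub>j)\<close> of the power (intersected with the
  irrationals in the irrational case) constraining finitely many coordinates, refined in stages by
  splitting each box into countably many disjoint boxes. Along a branch every coordinate is
  eventually constrained by nested intervals which are halved infinitely often, whose right ends keep
  decreasing and, for the irrational line, which end up strictly above or below every rational; so a
  branch meets in exactly one point. The tree grows into the space because of the staircase stages: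
  when the coordinates up to \<open>e\<close> are split simultaneously by dyadic levels, all but finitely many
  sons of a node containing \<open>p\<close> lie strictly to the right of \<open>p\<close> in these coordinates, hence inside
  any Sorgenfrey neighbourhood of \<open>p\<close> once the node is thin enough.\<close>

lemma topspace_sorgenfrey_line [simp]: "topspace sorgenfrey_line = UNIV"
proof -
  have "x \<in> \<Union>{{a..<b} | a b. a < b}" for x :: real
  proof (rule UnionI[of "{x..<x+1}"])
    show "{x..<x+1} \<in> {{a..<b} | a b. a < b}"
      by (intro CollectI exI[of _ x] exI[of _ "x+1"]) simp
  qed simp
  then show ?thesis unfolding sorgenfrey_line_def by auto
qed

lemma openin_sorgenfrey_line_atLeastLessThan: "openin sorgenfrey_line {a..<b}"
proof (cases "a < b")
  case True
  then show ?thesis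
    unfolding sorgenfrey_line_def by (intro topology_generated_by_Basis) auto
qed auto

lemma openin_sorgenfrey_line_right_interval:
  assumes "openin sorgenfrey_line U" "p \<in> U"
  shows "\<exists>e>0. {p..<p+e} \<subseteq> U"
proof -
  have "generate_topology_on {{a..<b} | a b. a < (b::real)} U"
    using assms(1) unfolding sorgenfrey_line_def openin_topology_generated_by_iff .
  then show ?thesis
    using assms(2)
  proof (induction arbitrary: p rule: generate_topology_on.induct)
    case (Int U V)
    then obtain e1 e2 where "e1 > 0" "{p..<p+e1} \<subseteq> U" "e2 > 0" "{p..<p+e2} \<subseteq> V" by blast
    then show ?case by (intro exI[of _ "min e1 e2"]) (auto simp: subset_eq)
  next
    case (UN K)
    then show ?case by blast
  next
    case (Basis s)
    then obtain a b where "s = {a..<b}" by blast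
    with Basis show ?case by (intro exI[of _ "b - p"]) auto
  qed simp
qed

section \<open>Branches of the tree of finite sequences\<close>

lemma prefix_nth: "prefix xs ys \<Longrightarrow> i < length xs \<Longrightarrow> xs ! i = ys ! i"
  by (auto simp: prefix_def nth_append)

definition seq_prefix :: "(nat \<Rightarrow> 'a) \<Rightarrow> nat \<Rightarrow> 'a list" where
  "seq_prefix f n = map f [0..<n]"

lemma tree_chain_iff_prefix: "tree_chain B \<longleftrightarrow> (\<forall>x\<in>B. \<forall>y\<in>B. prefix x y \<or> prefix y x)"
  unfolding tree_chain_def by (auto simp: strict_prefix_def)

lemma branch_comparable:
  assumes "branch B" "x \<in> B" "y \<in> B"
  shows "prefix x y \<or> prefix y x"
proof -
  have "tree_chain B"
    using assms(1) unfolding branch_def by (rule conjunct1)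
  then show ?thesis
    using assms(2,3) unfolding tree_chain_iff_prefix by blast
qed

lemma branch_insert_comparable:
  assumes "branch B" "\<forall>y\<in>B. prefix u y \<or> prefix y u"
  shows "u \<in> B"
proof -
  have "tree_chain (insert u B)"
    unfolding tree_chain_iff_prefix
  proof (intro ballI)
    fix x y assume "x \<in> insert u B" "y \<in> insert u B"
    then show "prefix x y \<or> prefix y x"
      using assms(2) branch_comparable[OF assms(1)] by (elim insertE) auto
  qed
  moreover have "\<forall>C. tree_chain C \<and> B \<subseteq> C \<longrightarrow> C = B"
    using assms(1) unfolding branch_def by (rule conjunct2)
  ultimately have "insert u B = B"
    by (meson subset_insertI)
  then show ?thesis by blast
qed

lemma branch_prefix_closed:
  assumes "branch B" "w \<in> B" "prefix u w"
  shows "u \<in> B"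
proof (rule branch_insert_comparable[OF assms(1)], intro ballI)
  fix y assume "y \<in> B"
  then have "prefix y w \<or> prefix w y"
    using branch_comparable[OF assms(1)] assms(2) by blast
  then show "prefix u y \<or> prefix y u"
  proof
    assume "prefix y w"
    then show ?thesis using prefix_same_cases[OF assms(3)] by blast
  next
    assume "prefix w y"
    then show ?thesis using prefix_order.trans[OF assms(3)] by blast
  qed
qed

lemma branch_unbounded:
  assumes "branch B"
  shows "\<exists>w\<in>B. n \<le> length w"
proof (rule ccontr)
  assume "\<not> ?thesis"
  then have "length ` B \<subseteq> {..<n}"
    by auto
  then have fin: "finite (length ` B)"
    by (rule finite_subset) simp
  define m where "m = Max (length ` B)"
  have le_m: "length y \<le> m" if "y \<in> B" for y
    unfolding m_def using Max_ge[OF fin imageI[OF that]] .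
  have "[] \<in> B"
    by (rule branch_insert_comparable[OF assms]) simp
  then have "m \<in> length ` B"
    unfolding m_def using Max_in[OF fin] by blast
  then obtain w where w: "w \<in> B" "length w = m"
    by blast
  have "prefix y (w @ [0])" if "y \<in> B" for y
  proof -
    have "prefix y w \<or> prefix w y"
      by (rule branch_comparable[OF assms that w(1)])
    moreover have "length y \<le> length w"
      using le_m[OF that] w(2) by simp
    ultimately have "prefix y w"
      using prefix_length_prefix[of y y w] by blast
    then show ?thesis by (rule prefix_prefix)
  qed
  then have "w @ [0] \<in> B"
    using branch_insert_comparable[OF assms] by blast
  then have "length (w @ [0]) \<le> m"
    by (rule le_m)
  then show False
    using w(2) by simp
qed

lemma branch_eq_range_seq_prefix:
  assumes "branch B"
  shows "\<exists>f. B = range (seq_prefix f)"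
proof -
  define W where "W i = (SOME w. w \<in> B \<and> Suc i \<le> length w)" for i
  have W: "W i \<in> B \<and> Suc i \<le> length (W i)" for i
    unfolding W_def by (rule someI_ex) (use branch_unbounded[OF assms] in blast)
  define f where "f i = W i ! i" for i
  have on_branch: "w = seq_prefix f (length w)" if "w \<in> B" for w
  proof (rule nth_equalityI)
    fix i assume i: "i < length w"
    have "prefix w (W i) \<or> prefix (W i) w"
      using branch_comparable[OF assms that] W by blast
    then have "w ! i = W i ! i"
    proof
      assume "prefix w (W i)"
      then show ?thesis using i prefix_nth by blast
    next
      assume "prefix (W i) w"
      then show ?thesis using W[of i] prefix_nth[of "W i" w i] by simp
    qed
    then show "w ! i = seq_prefix f (length w) ! i"
      using i by (simp add: seq_prefix_def f_def)
  qed (simp add: seq_prefix_def)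
  have "seq_prefix f n \<in> B" for n
  proof -
    obtain w where w: "w \<in> B" "n \<le> length w"
      using branch_unbounded[OF assms] by blast
    have "take n w = take n (seq_prefix f (length w))"
      using on_branch[OF w(1)] by simp
    also have "\<dots> = seq_prefix f n"
      using w(2) by (simp add: seq_prefix_def take_map)
    finally have "take n w = seq_prefix f n" .
    moreover have "take n w \<in> B"
      using branch_prefix_closed[OF assms w(1)] by (simp add: take_is_prefix)
    ultimately show ?thesis by simp
  qed
  then have "B = range (seq_prefix f)"
    using on_branch by blast
  then show ?thesis by blast
qed

section \<open>Nested intervals and dyadic subdivisions\<close>

text \<open>Without the strict decrease of the right ends, nested half-open intervals could have empty
  intersection.\<close>

lemma nested_intervals_unique_point:
  fixes A B :: "nat \<Rightarrow> real"
  assumes nested: "\<And>n. n \<ge> n0 \<Longrightarrow> A n \<le> A (Suc n) \<and> B (Suc n) \<le> B n \<and> A n < B n"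
    and small: "\<And>e. e > 0 \<Longrightarrow> \<exists>n\<ge>n0. B n - A n < e"
    and right_decreasing: "\<And>n. n \<ge> n0 \<Longrightarrow> \<exists>m>n. B m < B n"
  shows "\<exists>!y. \<forall>n\<ge>n0. A n \<le> y \<and> y < B n"
proof -
  define A' where "A' k = A (n0 + k)" for k
  define B' where "B' k = B (n0 + k)" for k
  have inc: "incseq A'" unfolding A'_def by (rule incseq_SucI) (use nested in auto)
  have dec: "decseq B'" unfolding B'_def by (rule decseq_SucI) (use nested in auto)
  have AB: "A' n \<le> B' m" for n m
  proof -
    have "A' n \<le> A' (max n m)" using inc by (simp add: incseq_def)
    also have "\<dots> < B' (max n m)" unfolding A'_def B'_def using nested by simp
    also have "\<dots> \<le> B' m" using dec by (simp add: decseq_def)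
    finally show ?thesis by simp
  qed
  define y where "y = Sup (range A')"
  have Ay: "A' n \<le> y" for n
    unfolding y_def using AB by (intro cSup_upper bdd_aboveI2) auto
  have yB: "y \<le> B' m" for m
    unfolding y_def using AB by (intro cSup_least) auto
  have yB_strict: "y < B' n" for n
  proof -
    obtain m where "m > n0 + n" "B m < B (n0 + n)" using right_decreasing[of "n0 + n"] by auto
    then have "B' (m - n0) < B' n" unfolding B'_def by simp
    with yB[of "m - n0"] show ?thesis by simp
  qed
  have y: "\<forall>n\<ge>n0. A n \<le> y \<and> y < B n"
  proof (intro allI impI)
    fix n assume "n \<ge> n0"
    then show "A n \<le> y \<and> y < B n"
      using Ay[of "n - n0"] yB_strict[of "n - n0"] unfolding A'_def B'_def by simp
  qed
  have "v = y" if v: "\<forall>n\<ge>n0. A n \<le> v \<and> v < B n" for v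
  proof (rule ccontr)
    assume "v \<noteq> y"
    then have "\<bar>v - y\<bar> > 0" by simp
    then obtain n where n: "n \<ge> n0" "B n - A n < \<bar>v - y\<bar>" using small by blast
    from v y n(1) have "A n \<le> v" "v < B n" "A n \<le> y" "y < B n" by auto
    then have "\<bar>v - y\<bar> < B n - A n" unfolding abs_less_iff by linarith
    with n show False by simp
  qed
  with y show ?thesis by blast
qed

definition dyadic_up :: "real \<Rightarrow> real \<Rightarrow> nat \<Rightarrow> real" where
  "dyadic_up a b m = b - (b - a) / 2 ^ m"

lemma dyadic_up_0 [simp]: "dyadic_up a b 0 = a"
  by (simp add: dyadic_up_def)

lemma strict_mono_dyadic_up: "a < b \<Longrightarrow> strict_mono (dyadic_up a b)"
  unfolding strict_mono_Suc_iff dyadic_up_def by (simp add: divide_strict_left_mono)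

lemma dyadic_up_less_iff: "a < b \<Longrightarrow> dyadic_up a b m < dyadic_up a b m' \<longleftrightarrow> m < m'"
  by (rule strict_mono_less[OF strict_mono_dyadic_up])

lemma dyadic_up_le_iff: "a < b \<Longrightarrow> dyadic_up a b m \<le> dyadic_up a b m' \<longleftrightarrow> m \<le> m'"
  by (rule strict_mono_less_eq[OF strict_mono_dyadic_up])

lemma dyadic_up_less_right: "a < b \<Longrightarrow> dyadic_up a b m < b"
  unfolding dyadic_up_def by simp

lemma dyadic_up_ge_left: "a < b \<Longrightarrow> a \<le> dyadic_up a b m"
  using dyadic_up_le_iff[of a b 0 m] by simp

lemma dyadic_up_Suc_diff: "dyadic_up a b (Suc m) - dyadic_up a b m = (b - a) / 2 ^ Suc m"
  unfolding dyadic_up_def by (simp add: field_simps)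

lemma dyadic_up_unbounded:
  assumes "a < b" "x < b"
  shows "\<exists>k. x < dyadic_up a b k"
proof -
  obtain k where "(b - a) / (b - x) < 2 ^ k"
    using real_arch_pow[of 2 "(b - a) / (b - x)"] by auto
  then have "(b - a) / 2 ^ k < b - x"
    using assms by (simp add: divide_less_eq mult.commute)
  then show ?thesis unfolding dyadic_up_def by (intro exI[of _ k]) simp
qed

lemma dyadic_up_rat: "a \<in> \<rat> \<Longrightarrow> b \<in> \<rat> \<Longrightarrow> dyadic_up a b m \<in> \<rat>"
  unfolding dyadic_up_def by (intro Rats_diff Rats_divide Rats_power) auto

definition dyadic_up_index :: "real \<Rightarrow> real \<Rightarrow> real \<Rightarrow> nat" where
  "dyadic_up_index a b x = (LEAST k. x < dyadic_up a b (Suc k))"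

lemma dyadic_up_index_iff:
  assumes "a < b" "a \<le> x" "x < b"
  shows "dyadic_up a b m \<le> x \<longleftrightarrow> m \<le> dyadic_up_index a b x"
    and "x < dyadic_up a b (Suc m) \<longleftrightarrow> dyadic_up_index a b x \<le> m"
proof -
  let ?l = "dyadic_up_index a b x"
  obtain k where "x < dyadic_up a b k"
    using dyadic_up_unbounded[OF assms(1,3)] by blast
  then have "x < dyadic_up a b (Suc k)"
    using dyadic_up_less_iff[OF assms(1), of k "Suc k"] by simp
  then have above: "x < dyadic_up a b (Suc ?l)"
    unfolding dyadic_up_index_def by (rule LeastI)
  have below: "dyadic_up a b ?l \<le> x"
  proof (cases ?l)
    case (Suc l)
    then have "\<not> x < dyadic_up a b (Suc l)"
      using not_less_Least[of l "\<lambda>k. x < dyadic_up a b (Suc k)"] unfolding dyadic_up_index_def by simp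
    then show ?thesis using Suc by simp
  qed (use assms in simp)
  show "x < dyadic_up a b (Suc m) \<longleftrightarrow> ?l \<le> m"
  proof
    assume "x < dyadic_up a b (Suc m)"
    then show "?l \<le> m" unfolding dyadic_up_index_def by (rule Least_le)
  next
    assume "?l \<le> m"
    then show "x < dyadic_up a b (Suc m)"
      using above dyadic_up_le_iff[OF assms(1), of "Suc ?l" "Suc m"] by simp
  qed
  show "dyadic_up a b m \<le> x \<longleftrightarrow> m \<le> ?l"
  proof
    assume "dyadic_up a b m \<le> x"
    show "m \<le> ?l"
    proof (rule ccontr)
      assume "\<not> m \<le> ?l"
      then have "dyadic_up a b (Suc ?l) \<le> dyadic_up a b m"
        using dyadic_up_le_iff[OF assms(1), of "Suc ?l" m] by simp
      with above \<open>dyadic_up a b m \<le> x\<close> show False by simp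
    qed
  next
    assume "m \<le> ?l"
    then show "dyadic_up a b m \<le> x"
      using below dyadic_up_le_iff[OF assms(1), of m ?l] by simp
  qed
qed

definition dyadic_down :: "real \<Rightarrow> real \<Rightarrow> nat \<Rightarrow> real" where
  "dyadic_down a q k = a + (q - a) / 2 ^ k"

lemma dyadic_down_0 [simp]: "dyadic_down a q 0 = q"
  by (simp add: dyadic_down_def)

lemma dyadic_down_less_iff: "a < q \<Longrightarrow> dyadic_down a q k' < dyadic_down a q k \<longleftrightarrow> k < k'"
proof -
  assume "a < q"
  then have "strict_mono (\<lambda>k. - dyadic_down a q k)"
    unfolding strict_mono_Suc_iff dyadic_down_def by (simp add: divide_strict_left_mono)
  then show ?thesis
    using strict_mono_less[of "\<lambda>k. - dyadic_down a q k" k k'] by simp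
qed

lemma dyadic_down_le_iff: "a < q \<Longrightarrow> dyadic_down a q k' \<le> dyadic_down a q k \<longleftrightarrow> k \<le> k'"
  using dyadic_down_less_iff[of a q k k'] by (meson not_le)

lemma dyadic_down_greater_left: "a < q \<Longrightarrow> a < dyadic_down a q k"
  unfolding dyadic_down_def by simp

lemma dyadic_down_le_right: "a < q \<Longrightarrow> dyadic_down a q k \<le> q"
  using dyadic_down_le_iff[of a q k 0] by simp

lemma dyadic_down_rat: "a \<in> \<rat> \<Longrightarrow> q \<in> \<rat> \<Longrightarrow> dyadic_down a q k \<in> \<rat>"
  unfolding dyadic_down_def by (intro Rats_add Rats_diff Rats_divide Rats_power) auto

lemma dyadic_down_cell_ex1:
  assumes "a < x" "x < q"
  shows "\<exists>!k. dyadic_down a q (Suc k) \<le> x \<and> x < dyadic_down a q k"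
proof -
  have aq: "a < q" using assms by simp
  obtain k0 where "(q - a) / (x - a) < 2 ^ k0"
    using real_arch_pow[of 2 "(q - a) / (x - a)"] by auto
  then have "(q - a) / 2 ^ k0 < x - a"
    using assms by (simp add: divide_less_eq mult.commute)
  then have "dyadic_down a q k0 < x"
    unfolding dyadic_down_def by simp
  moreover have "dyadic_down a q (Suc k0) \<le> dyadic_down a q k0"
    using dyadic_down_le_iff[OF aq, of "Suc k0" k0] by simp
  ultimately have ex: "\<exists>k. dyadic_down a q (Suc k) \<le> x"
    by (intro exI[of _ k0]) linarith
  define k where "k = (LEAST k. dyadic_down a q (Suc k) \<le> x)"
  have lower: "dyadic_down a q (Suc k) \<le> x"
    unfolding k_def using ex by (rule LeastI_ex)
  have upper: "x < dyadic_down a q k"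
  proof (cases k)
    case (Suc l)
    then have "\<not> dyadic_down a q (Suc l) \<le> x"
      using not_less_Least[of l "\<lambda>k. dyadic_down a q (Suc k) \<le> x"] unfolding k_def by simp
    then show ?thesis using Suc by simp
  qed (use assms in simp)
  show ?thesis
  proof (rule ex1I[of _ k])
    fix k' assume k': "dyadic_down a q (Suc k') \<le> x \<and> x < dyadic_down a q k'"
    have "\<not> Suc k \<le> k'"
      using k' lower dyadic_down_le_iff[OF aq, of k' "Suc k"] by linarith
    moreover have "\<not> Suc k' \<le> k"
      using k' upper dyadic_down_le_iff[OF aq, of k "Suc k'"] by linarith
    ultimately show "k' = k" by simp
  qed (use lower upper in simp)
qed

definition unit_cell :: "nat \<Rightarrow> real \<times> real" where
  "unit_cell k = (of_int (int_decode k), of_int (int_decode k) + 1)"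

lemma unit_cell_ex1: "\<exists>!k. x \<in> {fst (unit_cell k)..<snd (unit_cell k)}"
proof (rule ex1I[of _ "int_encode \<lfloor>x\<rfloor>"])
  fix k assume "x \<in> {fst (unit_cell k)..<snd (unit_cell k)}"
  then have "\<lfloor>x\<rfloor> = int_decode k"
    unfolding unit_cell_def by (intro floor_unique) auto
  then show "k = int_encode \<lfloor>x\<rfloor>" by simp
qed (simp add: unit_cell_def)

definition dyadic_cell :: "real \<Rightarrow> real \<Rightarrow> nat \<Rightarrow> real \<times> real" where
  "dyadic_cell a b k = (dyadic_up a b k, dyadic_up a b (Suc k))"

lemma dyadic_cell_ex1:
  assumes "a < b" "a \<le> x" "x < b"
  shows "\<exists>!k. x \<in> {fst (dyadic_cell a b k)..<snd (dyadic_cell a b k)}"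
proof (rule ex1I[of _ "dyadic_up_index a b x"])
  fix k assume "x \<in> {fst (dyadic_cell a b k)..<snd (dyadic_cell a b k)}"
  then show "k = dyadic_up_index a b x"
    using dyadic_up_index_iff[OF assms] unfolding dyadic_cell_def by (simp add: le_antisym)
qed (use dyadic_up_index_iff[OF assms] in \<open>simp add: dyadic_cell_def\<close>)

lemma dyadic_cell_bounds:
  assumes "a < b"
  shows "a \<le> fst (dyadic_cell a b k) \<and> fst (dyadic_cell a b k) < snd (dyadic_cell a b k)
    \<and> snd (dyadic_cell a b k) < b"
  unfolding dyadic_cell_def
  using dyadic_up_ge_left[OF assms] dyadic_up_less_right[OF assms] dyadic_up_less_iff[OF assms] by simp

lemma dyadic_cell_halves:
  assumes "a < b"
  shows "snd (dyadic_cell a b k) - fst (dyadic_cell a b k) \<le> (b - a) / 2"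
proof -
  have "(b - a) / 2 ^ Suc k \<le> (b - a) / 2"
    using assms by (intro divide_left_mono) auto
  then show ?thesis
    using dyadic_up_Suc_diff[of a b k] unfolding dyadic_cell_def by simp
qed

lemma dyadic_cell_rat: "a \<in> \<rat> \<Longrightarrow> b \<in> \<rat> \<Longrightarrow> fst (dyadic_cell a b k) \<in> \<rat> \<and> snd (dyadic_cell a b k) \<in> \<rat>"
  unfolding dyadic_cell_def by (simp add: dyadic_up_rat)

definition avoid_point :: "real \<Rightarrow> real \<Rightarrow> real \<Rightarrow> real" where
  "avoid_point a b q = (if a < q \<and> q < b then q else (a + b) / 2)"

text \<open>The cell \<open>[c, b)\<close> followed by cells accumulating at \<open>a\<close>: a partition of \<open>(a, b)\<close> in which
  \<open>q\<close> never lies strictly inside a cell.\<close>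

definition avoiding_cell :: "real \<Rightarrow> real \<Rightarrow> real \<Rightarrow> nat \<Rightarrow> real \<times> real" where
  "avoiding_cell a b q k = (let c = avoid_point a b q in
     case k of 0 \<Rightarrow> (c, b) | Suc k' \<Rightarrow> (dyadic_down a c (Suc k'), dyadic_down a c k'))"

lemma avoid_point_between: "a < b \<Longrightarrow> a < avoid_point a b q \<and> avoid_point a b q < b"
  unfolding avoid_point_def by auto

lemma avoiding_cell_bounds:
  assumes "a < b"
  shows "a < fst (avoiding_cell a b q k) \<and> fst (avoiding_cell a b q k) < snd (avoiding_cell a b q k)
    \<and> snd (avoiding_cell a b q k) \<le> b"
proof -
  let ?c = "avoid_point a b q"
  have c: "a < ?c" "?c < b" using avoid_point_between[OF assms] by auto
  have "dyadic_down a ?c k' \<le> b" for k'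
    using dyadic_down_le_right[OF c(1), of k'] c(2) by linarith
  then show ?thesis
    using c dyadic_down_greater_left[OF c(1)] dyadic_down_less_iff[OF c(1)]
    unfolding avoiding_cell_def Let_def by (cases k) auto
qed

lemma avoiding_cell_avoids:
  assumes "a < b"
  shows "q \<le> fst (avoiding_cell a b q k) \<or> snd (avoiding_cell a b q k) \<le> q"
proof (cases "a < q \<and> q < b")
  case True
  then have "avoid_point a b q = q" by (simp add: avoid_point_def)
  then show ?thesis
    using dyadic_down_le_right[of a q] True unfolding avoiding_cell_def by (cases k) auto
next
  case False
  then show ?thesis using avoiding_cell_bounds[OF assms, of q k] by auto
qed

lemma avoiding_cell_rat:
  "a \<in> \<rat> \<Longrightarrow> b \<in> \<rat> \<Longrightarrow> q \<in> \<rat> \<Longrightarrow> fst (avoiding_cell a b q k) \<in> \<rat> \<and> snd (avoiding_cell a b q k) \<in> \<rat>"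
  unfolding avoiding_cell_def avoid_point_def Let_def
  by (cases k) (auto intro!: dyadic_down_rat Rats_divide Rats_add)

lemma avoiding_cell_ex1:
  assumes "a < x" "x < b"
  shows "\<exists>!k. x \<in> {fst (avoiding_cell a b q k)..<snd (avoiding_cell a b q k)}"
proof -
  let ?c = "avoid_point a b q"
  have "a < b" using assms by simp
  then have c: "a < ?c" "?c < b" using avoid_point_between by blast+
  have cell: "x \<in> {fst (avoiding_cell a b q k)..<snd (avoiding_cell a b q k)} \<longleftrightarrow>
      (case k of 0 \<Rightarrow> ?c \<le> x | Suc k' \<Rightarrow> dyadic_down a ?c (Suc k') \<le> x \<and> x < dyadic_down a ?c k')" for k
    using assms unfolding avoiding_cell_def Let_def by (cases k) auto
  show ?thesis
  proof (cases "?c \<le> x")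
    case True
    show ?thesis
    proof (rule ex1I[of _ 0])
      fix k assume k: "x \<in> {fst (avoiding_cell a b q k)..<snd (avoiding_cell a b q k)}"
      show "k = 0"
      proof (cases k)
        case (Suc k')
        with k have "x < dyadic_down a ?c k'" unfolding cell by simp
        with dyadic_down_le_right[OF c(1), of k'] True show ?thesis by linarith
      qed
    qed (use True assms in \<open>simp add: avoiding_cell_def\<close>)
  next
    case False
    then have "x < ?c" by simp
    from dyadic_down_cell_ex1[OF assms(1) this]
    obtain k where k: "dyadic_down a ?c (Suc k) \<le> x \<and> x < dyadic_down a ?c k"
      and unique: "\<forall>k'. dyadic_down a ?c (Suc k') \<le> x \<and> x < dyadic_down a ?c k' \<longrightarrow> k' = k"
      by (rule ex1E)
    show ?thesis
      unfolding cell
    proof (rule ex1I[of _ "Suc k"])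
      fix k'' assume "case k'' of 0 \<Rightarrow> ?c \<le> x
        | Suc k' \<Rightarrow> dyadic_down a ?c (Suc k') \<le> x \<and> x < dyadic_down a ?c k'"
      then show "k'' = Suc k"
        using False unique by (cases k'') simp_all
    qed (use k in simp)
  qed
qed

section \<open>Boxes and their splittings\<close>

type_synonym bounds = "(nat \<Rightarrow> real) \<times> (nat \<Rightarrow> real)"

definition in_box :: "nat set \<Rightarrow> bounds \<Rightarrow> (nat \<Rightarrow> real) \<Rightarrow> bool" where
  "in_box J s x \<longleftrightarrow> (\<forall>j\<in>J. x j \<in> {fst s j..<snd s j})"

lemma in_box_shrink:
  assumes "in_box J s' x" "J' \<subseteq> J" "\<forall>j\<in>J'. fst s j \<le> fst s' j \<and> snd s' j \<le> snd s j"
  shows "in_box J' s x"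
  using assms unfolding in_box_def by force

definition set_coord :: "nat \<Rightarrow> real \<times> real \<Rightarrow> bounds \<Rightarrow> bounds" where
  "set_coord j c s = ((fst s)(j := fst c), (snd s)(j := snd c))"

lemma set_coord_simps [simp]:
  "fst (set_coord j c s) = (fst s)(j := fst c)" "snd (set_coord j c s) = (snd s)(j := snd c)"
  unfolding set_coord_def by simp_all

lemma in_box_set_coord:
  "in_box (insert j J) (set_coord j c s) x \<longleftrightarrow> in_box (J - {j}) s x \<and> x j \<in> {fst c..<snd c}"
  unfolding in_box_def set_coord_def by auto

lemma set_coord_ex1:
  assumes "in_box (J - {j}) s x" "\<exists>!k. x j \<in> {fst (c k)..<snd (c k)}"
  shows "\<exists>!k. in_box (insert j J) (set_coord j (c k) s) x"
  using assms by (simp add: in_box_set_coord)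

definition stair_position :: "nat \<Rightarrow> (nat \<Rightarrow> nat) \<Rightarrow> nat \<Rightarrow> nat \<Rightarrow> bool" where
  "stair_position r l m i \<longleftrightarrow> i < r \<and> l i = m \<and> (\<forall>t<r. m \<le> l t) \<and> (\<forall>t<i. m < l t)"

lemma stair_position_unique:
  assumes "stair_position r l m i" "stair_position r l m' i'"
  shows "m = m' \<and> i = i'"
proof -
  have "m = m'"
    using assms unfolding stair_position_def by (metis le_antisym)
  moreover have "\<not> i < i'" "\<not> i' < i"
    using assms \<open>m = m'\<close> unfolding stair_position_def by auto
  ultimately show ?thesis by simp
qed

lemma stair_position_exists:
  assumes "0 < r"
  shows "\<exists>m i. stair_position r l m i"
proof -
  define m where "m = Min (l ` {..<r})"
  have fin: "finite (l ` {..<r})" "l ` {..<r} \<noteq> {}" using assms by auto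
  have m_le: "m \<le> l t" if "t < r" for t
    unfolding m_def using fin that by simp
  obtain t0 where t0: "t0 < r" "l t0 = m"
    using Min_in[OF fin] unfolding m_def by auto
  define i where "i = (LEAST t. t < r \<and> l t = m)"
  have i: "i < r \<and> l i = m"
    unfolding i_def by (rule LeastI[of _ t0]) (use t0 in simp)
  have "m < l t" if "t < i" for t
    using not_less_Least[of t "\<lambda>t. t < r \<and> l t = m"] that i m_le[of t] unfolding i_def by fastforce
  then have "stair_position r l m i"
    unfolding stair_position_def using i m_le by auto
  then show ?thesis by blast
qed

lemma stair_position_ex1:
  assumes "0 < r"
  shows "\<exists>!k. stair_position r l (k div r) (k mod r)"
proof -
  obtain m i where P: "stair_position r l m i"
    using stair_position_exists[OF assms] by blast
  then have "i < r" unfolding stair_position_def by simp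
  show ?thesis
  proof (rule ex1I[of _ "m * r + i"])
    show "stair_position r l ((m * r + i) div r) ((m * r + i) mod r)"
      using P \<open>i < r\<close> by simp
    fix k assume "stair_position r l (k div r) (k mod r)"
    with stair_position_unique[OF this P] show "k = m * r + i"
      by (metis div_mult_mod_eq)
  qed
qed

text \<open>Son \<open>k = m r + i\<close>: coordinate \<open>i\<close> is cut to its \<open>m\<close>-th dyadic cell, the coordinates before
  \<open>i\<close> start at level \<open>m + 1\<close> and those after it at level \<open>m\<close>. A point lies in the son where \<open>m\<close> is
  the least of its dyadic levels and \<open>i\<close> the first coordinate attaining it.\<close>

definition split_stair :: "nat \<Rightarrow> nat \<Rightarrow> bounds \<Rightarrow> bounds" where
  "split_stair r k s = (let m = k div r; i = k mod r; level = \<lambda>t. dyadic_up (fst s t) (snd s t) in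
     (\<lambda>t. if t < r then level t (if t < i then Suc m else m) else fst s t,
      \<lambda>t. if t = i then level t (Suc m) else snd s t))"

lemma split_stair_outside:
  assumes "0 < r" "\<not> t < r"
  shows "fst (split_stair r k s) t = fst s t \<and> snd (split_stair r k s) t = snd s t"
  using assms mod_less_divisor[OF assms(1), of k] unfolding split_stair_def Let_def by auto

lemma split_stair_bounds:
  assumes "fst s t < snd s t" "t < r"
  shows "dyadic_up (fst s t) (snd s t) (k div r) \<le> fst (split_stair r k s) t
    \<and> fst (split_stair r k s) t < snd (split_stair r k s) t \<and> snd (split_stair r k s) t \<le> snd s t"
  using assms dyadic_up_less_iff[OF assms(1)] dyadic_up_le_iff[OF assms(1)] dyadic_up_less_right[OF assms(1)]
  unfolding split_stair_def Let_def by (auto simp: less_imp_le)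

lemma split_stair_rat:
  "fst s t \<in> \<rat> \<Longrightarrow> snd s t \<in> \<rat> \<Longrightarrow> fst (split_stair r k s) t \<in> \<rat> \<and> snd (split_stair r k s) t \<in> \<rat>"
  unfolding split_stair_def Let_def by (auto intro: dyadic_up_rat)

lemma split_stair_ex1:
  assumes "0 < r" "{..<r} \<subseteq> J" "\<forall>t<r. fst s t < snd s t" "in_box J s x"
  shows "\<exists>!k. in_box J (split_stair r k s) x"
proof -
  define l where "l t = dyadic_up_index (fst s t) (snd s t) (x t)" for t
  have x: "fst s t \<le> x t" "x t < snd s t" if "t < r" for t
    using assms(2,4) that unfolding in_box_def by auto
  have level [simp]: "dyadic_up (fst s t) (snd s t) m \<le> x t \<longleftrightarrow> m \<le> l t"
    "x t < dyadic_up (fst s t) (snd s t) (Suc m) \<longleftrightarrow> l t \<le> m" if "t < r" for t m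
    using dyadic_up_index_iff[OF _ x[OF that]] assms(3) that unfolding l_def by auto
  have "in_box J (split_stair r k s) x \<longleftrightarrow> stair_position r l (k div r) (k mod r)" for k
  proof -
    have "in_box J (split_stair r k s) x \<longleftrightarrow> in_box {..<r} (split_stair r k s) x"
      unfolding in_box_def
    proof (intro iffI ballI)
      fix j assume "\<forall>j\<in>J. x j \<in> {fst (split_stair r k s) j..<snd (split_stair r k s) j}" "j \<in> {..<r}"
      then show "x j \<in> {fst (split_stair r k s) j..<snd (split_stair r k s) j}"
        using assms(2) by blast
    next
      fix j assume inner: "\<forall>j\<in>{..<r}. x j \<in> {fst (split_stair r k s) j..<snd (split_stair r k s) j}"
        and "j \<in> J"
      show "x j \<in> {fst (split_stair r k s) j..<snd (split_stair r k s) j}"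
      proof (cases "j < r")
        case False
        then show ?thesis
          using split_stair_outside[OF assms(1) False, of k s] assms(4) \<open>j \<in> J\<close> unfolding in_box_def by simp
      qed (use inner in simp)
    qed
    also have "\<dots> \<longleftrightarrow> stair_position r l (k div r) (k mod r)"
      using x mod_less_divisor[OF assms(1), of k]
      unfolding in_box_def stair_position_def split_stair_def Let_def by (auto simp: le_antisym)
    finally show ?thesis .
  qed
  then show ?thesis
    using stair_position_ex1[OF assms(1), of l] by simp
qed

lemma sons_eq_range: "sons v = range (\<lambda>k. v @ [k])"
  unfolding sons_def by auto

lemma Union_sons_from_in_shoot: "(\<Union>k\<in>{N..}. F (v @ [k])) \<in> shoot F v"
proof -
  have "sons v - (\<lambda>k. v @ [k]) ` {N..} \<subseteq> (\<lambda>k. v @ [k]) ` {..<N}"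
  proof
    fix u assume "u \<in> sons v - (\<lambda>k. v @ [k]) ` {N..}"
    then obtain k where "u = v @ [k]" "\<not> N \<le> k" unfolding sons_def by auto
    then show "u \<in> (\<lambda>k. v @ [k]) ` {..<N}" by simp
  qed
  then have "finite (sons v - (\<lambda>k. v @ [k]) ` {N..})"
    by (rule finite_subset) simp
  moreover have "(\<lambda>k. v @ [k]) ` {N..} \<subseteq> sons v"
    unfolding sons_def by auto
  ultimately show ?thesis
    unfolding shoot_def by (intro CollectI exI[of _ "(\<lambda>k. v @ [k]) ` {N..}"]) (simp add: image_image)
qed

section \<open>A \<open>\<pi>\<close>-tree on the powers\<close>

locale sorgenfrey_power =
  fixes irrational :: bool and I :: "nat set"
  assumes index_set: "I = UNIV \<or> (\<exists>n\<ge>1. I = {..<n})"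
begin

definition line_points :: "real set" where
  "line_points = (if irrational then - \<rat> else UNIV)"

definition line :: "real topology" where
  "line = subtopology sorgenfrey_line line_points"

definition power :: "(nat \<Rightarrow> real) topology" where
  "power = product_topology (\<lambda>_. line) I"

definition active :: "nat \<Rightarrow> nat set" where
  "active n = {j \<in> I. 4 * j < n}"

definition opening_stage :: "nat \<Rightarrow> bool" where
  "opening_stage n \<longleftrightarrow> n mod 4 = 0 \<and> n div 4 \<in> I"

definition stair_width :: "nat \<Rightarrow> nat" where
  "stair_width e = card (I \<inter> {..e})"

definition coord_code :: "nat \<Rightarrow> nat" where
  "coord_code e = (if fst (prod_decode e) \<in> I then fst (prod_decode e) else 0)"

definition rat_enum :: "nat \<Rightarrow> real" where
  "rat_enum k = of_rat (from_nat k)"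

definition split_coord :: "nat \<Rightarrow> nat" where
  "split_coord n = (if opening_stage n then n div 4 else if n mod 4 = 0 then 0 else coord_code (n div 4))"

definition coord_cell :: "nat \<Rightarrow> real \<Rightarrow> real \<Rightarrow> nat \<Rightarrow> real \<times> real" where
  "coord_cell n a b k =
    (if opening_stage n then unit_cell k
     else if n mod 4 = 2 \<and> irrational then avoiding_cell a b (rat_enum (snd (prod_decode (n div 4)))) k
     else dyadic_cell a b k)"

text \<open>Stage \<open>n = 4 e + p\<close>, writing \<open>e = prod_encode (j, q)\<close>: for \<open>p = 0\<close> coordinate \<open>e\<close>
  becomes active with its unit cells (a dummy dyadic split of coordinate \<open>0\<close> if \<open>e \<notin> I\<close>); for
  \<open>p = 1\<close> coordinate \<open>j\<close> is at least halved; for \<open>p = 2\<close> it is moved off the \<open>q\<close>-th rational in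
  the irrational case; for \<open>p = 3\<close> the coordinates up to \<open>e\<close> are split as a staircase. As every
  pair \<open>(j, q)\<close> occurs, each coordinate is halved infinitely often and avoids every rational.
  The initial bounds only concern inactive coordinates and are never used.\<close>

definition refine :: "nat \<Rightarrow> bounds \<Rightarrow> nat \<Rightarrow> bounds" where
  "refine n s k =
    (if n mod 4 = 3 then split_stair (stair_width (n div 4)) k s
     else set_coord (split_coord n) (coord_cell n (fst s (split_coord n)) (snd s (split_coord n)) k) s)"

fun bounds_seq :: "(nat \<Rightarrow> nat) \<Rightarrow> nat \<Rightarrow> bounds" where
  "bounds_seq f 0 = (\<lambda>_. 0, \<lambda>_. 0)"
| "bounds_seq f (Suc n) = refine n (bounds_seq f n) (f n)"

definition box :: "nat \<Rightarrow> bounds \<Rightarrow> (nat \<Rightarrow> real) set" where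
  "box n s = {x \<in> PiE I (\<lambda>_. line_points). in_box (active n) s x}"

definition leaf :: "nat list \<Rightarrow> (nat \<Rightarrow> real) set" where
  "leaf v = box (length v) (bounds_seq (nth v) (length v))"

definition proper :: "real \<Rightarrow> real \<Rightarrow> bool" where
  "proper a b \<longleftrightarrow> a < b \<and> (irrational \<longrightarrow> a \<in> \<rat> \<and> b \<in> \<rat>)"

definition admissible :: "nat \<Rightarrow> bounds \<Rightarrow> bool" where
  "admissible n s \<longleftrightarrow> (\<forall>j\<in>active n. proper (fst s j) (snd s j))"

lemma zero_in_I: "0 \<in> I"
  using index_set by auto

lemma I_Int_atMost: "I \<inter> {..e} = {..<stair_width e}"
  using index_set
proof
  assume "I = UNIV"
  moreover have "{..e} = {..<Suc e}" by auto
  ultimately show ?thesis unfolding stair_width_def by simp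
next
  assume "\<exists>n\<ge>1. I = {..<n}"
  then obtain n where "n \<ge> 1" "I = {..<n}" by blast
  moreover have "{..<n} \<inter> {..e} = {..<min n (Suc e)}" by auto
  ultimately show ?thesis unfolding stair_width_def by simp
qed

lemma stair_width_pos: "0 < stair_width e"
proof -
  have "0 \<in> I \<inter> {..e}" using zero_in_I by simp
  then show ?thesis unfolding I_Int_atMost by simp
qed

lemma coord_code_in_I: "coord_code e \<in> I" and coord_code_le: "coord_code e \<le> e"
proof -
  have "fst (prod_decode e) \<le> e"
    using le_prod_encode_1[of "fst (prod_decode e)" "snd (prod_decode e)"] by simp
  then show "coord_code e \<in> I" "coord_code e \<le> e"
    unfolding coord_code_def using zero_in_I by auto
qed

lemma coord_code_prod_encode: "j \<in> I \<Longrightarrow> coord_code (prod_encode (j, k)) = j"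
  unfolding coord_code_def by simp

lemma rat_enum_surj: "q \<in> \<rat> \<Longrightarrow> \<exists>k. rat_enum k = q"
  unfolding rat_enum_def by (metis Rats_cases from_nat_to_nat)

lemma topspace_line: "topspace line = line_points"
  unfolding line_def by simp

lemma topspace_power: "topspace power = PiE I (\<lambda>_. line_points)"
  unfolding power_def by (simp add: topspace_line)

lemma active_Suc:
  "active (Suc n) = (if opening_stage n then insert (n div 4) (active n) else active n)"
  unfolding active_def opening_stage_def by (auto simp: less_Suc_eq)

lemma opening_stage_not_active: "opening_stage n \<Longrightarrow> n div 4 \<notin> active n"
  unfolding active_def opening_stage_def by auto

lemma split_coord_active:
  assumes "n mod 4 \<noteq> 3" "\<not> opening_stage n"
  shows "split_coord n \<in> active n"
proof (cases "n mod 4 = 0")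
  case True
  then have "n div 4 \<notin> I" using assms(2) unfolding opening_stage_def by simp
  then have "n div 4 \<noteq> 0" using zero_in_I by metis
  then have "0 < n" by (cases n) simp_all
  then show ?thesis using True assms(2) zero_in_I unfolding split_coord_def active_def by simp
next
  case False
  then have "0 < n mod 4" by simp
  then have "4 * coord_code (n div 4) < n"
    using coord_code_le[of "n div 4"] div_mult_mod_eq[of n 4] by linarith
  then show ?thesis using False assms(2) coord_code_in_I unfolding split_coord_def active_def by simp
qed

lemma active_Suc_split: "n mod 4 \<noteq> 3 \<Longrightarrow> active (Suc n) = insert (split_coord n) (active n)"
  using active_Suc[of n] split_coord_active[of n] by (auto simp: split_coord_def)

lemma active_Suc_stair: "n mod 4 = 3 \<Longrightarrow> active (Suc n) = active n"
  using active_Suc[of n] unfolding opening_stage_def by simp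

lemma stair_width_active:
  assumes "n mod 4 = 3"
  shows "{..<stair_width (n div 4)} \<subseteq> active n"
proof
  fix t assume "t \<in> {..<stair_width (n div 4)}"
  then have "t \<in> I" "t \<le> n div 4"
    using I_Int_atMost[of "n div 4"] by blast+
  moreover have "4 * (n div 4) < n"
    using assms div_mult_mod_eq[of n 4] by linarith
  ultimately show "t \<in> active n"
    unfolding active_def by simp
qed

lemma refine_stair: "n mod 4 = 3 \<Longrightarrow> refine n s k = split_stair (stair_width (n div 4)) k s"
  unfolding refine_def by simp

lemma refine_split:
  "n mod 4 \<noteq> 3 \<Longrightarrow> refine n s k = set_coord (split_coord n) (coord_cell n (fst s (split_coord n)) (snd s (split_coord n)) k) s"
  unfolding refine_def by simp

lemma coord_cell_proper:
  assumes "opening_stage n \<or> proper a b"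
  shows "proper (fst (coord_cell n a b k)) (snd (coord_cell n a b k))"
proof (cases "opening_stage n")
  case True
  then show ?thesis
    unfolding coord_cell_def proper_def unit_cell_def by (simp add: Rats_add)
next
  case False
  then have ab: "a < b" "irrational \<longrightarrow> a \<in> \<rat> \<and> b \<in> \<rat>"
    using assms unfolding proper_def by auto
  let ?q = "rat_enum (snd (prod_decode (n div 4)))"
  show ?thesis
  proof (cases "n mod 4 = 2 \<and> irrational")
    case True
    then have "coord_cell n a b k = avoiding_cell a b ?q k"
      using False unfolding coord_cell_def by simp
    moreover have "?q \<in> \<rat>" unfolding rat_enum_def by simp
    ultimately show ?thesis
      using True ab avoiding_cell_bounds[OF ab(1), of ?q k] avoiding_cell_rat[of a b ?q k]
      unfolding proper_def by simp
  next
    case not_avoiding: False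
    then have cell: "coord_cell n a b k = dyadic_cell a b k"
      using False unfolding coord_cell_def by auto
    show ?thesis
      using ab dyadic_cell_bounds[OF ab(1), of k] dyadic_cell_rat[of a b k] unfolding cell proper_def by simp
  qed
qed

lemma coord_cell_within:
  assumes "\<not> opening_stage n" "a < b"
  shows "a \<le> fst (coord_cell n a b k) \<and> snd (coord_cell n a b k) \<le> b"
proof (cases "n mod 4 = 2 \<and> irrational")
  case True
  then have "coord_cell n a b k = avoiding_cell a b (rat_enum (snd (prod_decode (n div 4)))) k"
    using assms(1) unfolding coord_cell_def by simp
  then show ?thesis
    using avoiding_cell_bounds[OF assms(2), of "rat_enum (snd (prod_decode (n div 4)))" k] by simp
next
  case False
  then have "coord_cell n a b k = dyadic_cell a b k"
    using assms(1) unfolding coord_cell_def by auto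
  then show ?thesis
    using dyadic_cell_bounds[OF assms(2), of k] by simp
qed

lemma coord_cell_ex1:
  assumes "\<not> opening_stage n" "proper a b" "a \<le> x" "x < b" "irrational \<longrightarrow> x \<notin> \<rat>"
  shows "\<exists>!k. x \<in> {fst (coord_cell n a b k)..<snd (coord_cell n a b k)}"
proof (cases "n mod 4 = 2 \<and> irrational")
  case True
  then have "a \<noteq> x" using assms(2,5) unfolding proper_def by auto
  then have "a < x" using assms(3) by simp
  moreover have "coord_cell n a b k = avoiding_cell a b (rat_enum (snd (prod_decode (n div 4)))) k" for k
    using True assms(1) unfolding coord_cell_def by simp
  ultimately show ?thesis
    using avoiding_cell_ex1[OF _ assms(4)] by simp
next
  case False
  then have "coord_cell n a b k = dyadic_cell a b k" for k
    using assms(1) unfolding coord_cell_def by auto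
  then show ?thesis
    using assms(2-4) dyadic_cell_ex1[of a b x] unfolding proper_def by simp
qed

lemma admissible_refine:
  assumes "admissible n s"
  shows "admissible (Suc n) (refine n s k)"
proof (cases "n mod 4 = 3")
  case True
  let ?r = "stair_width (n div 4)"
  have sub: "{..<?r} \<subseteq> active n" by (rule stair_width_active[OF True])
  show ?thesis
    unfolding admissible_def active_Suc_stair[OF True] refine_stair[OF True]
  proof
    fix j assume j: "j \<in> active n"
    then have "proper (fst s j) (snd s j)" using assms unfolding admissible_def by blast
    then show "proper (fst (split_stair ?r k s) j) (snd (split_stair ?r k s) j)"
      using split_stair_bounds[of s j ?r k] split_stair_rat[of s j ?r k]
        split_stair_outside[OF stair_width_pos[of "n div 4"], of j k s]
      unfolding proper_def by (cases "j < ?r") auto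
  qed
next
  case False
  let ?j = "split_coord n"
  have "opening_stage n \<or> proper (fst s ?j) (snd s ?j)"
    using assms split_coord_active[OF False] unfolding admissible_def by blast
  then have "proper (fst (coord_cell n (fst s ?j) (snd s ?j) k)) (snd (coord_cell n (fst s ?j) (snd s ?j) k))"
    by (rule coord_cell_proper)
  then show ?thesis
    using assms unfolding admissible_def active_Suc_split[OF False] refine_split[OF False] by auto
qed

lemma refine_shrinks:
  assumes "admissible n s" "j \<in> active n"
  shows "fst s j \<le> fst (refine n s k) j \<and> snd (refine n s k) j \<le> snd s j"
proof -
  have ab: "fst s j < snd s j" using assms unfolding admissible_def proper_def by blast
  show ?thesis
  proof (cases "n mod 4 = 3")
    case stair: True
    let ?r = "stair_width (n div 4)"
    have "fst s j \<le> fst (split_stair ?r k s) j \<and> snd (split_stair ?r k s) j \<le> snd s j"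
    proof (cases "j < ?r")
      case True
      then show ?thesis
        using split_stair_bounds[OF ab True, of k] dyadic_up_ge_left[OF ab, of "k div ?r"] by linarith
    next
      case False
      then show ?thesis
        using split_stair_outside[OF stair_width_pos[of "n div 4"] False, of k s] by simp
    qed
    then show ?thesis unfolding refine_stair[OF stair] .
  next
    case False
    have "\<not> opening_stage n" if "j = split_coord n"
      using that assms(2) opening_stage_not_active unfolding split_coord_def by auto
    then show ?thesis
      using coord_cell_within[OF _ ab] unfolding refine_split[OF False] by auto
  qed
qed

lemma refine_back:
  assumes "admissible n s" "in_box (active (Suc n)) (refine n s k) x"
  shows "in_box (active n) s x"
proof (rule in_box_shrink[OF assms(2)])
  show "active n \<subseteq> active (Suc n)"
    using active_Suc[of n] by auto
  show "\<forall>j\<in>active n. fst s j \<le> fst (refine n s k) j \<and> snd (refine n s k) j \<le> snd s j"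
    using refine_shrinks[OF assms(1)] by blast
qed

lemma refine_ex1:
  assumes "admissible n s" "x \<in> PiE I (\<lambda>_. line_points)" "in_box (active n) s x"
  shows "\<exists>!k. in_box (active (Suc n)) (refine n s k) x"
proof (cases "n mod 4 = 3")
  case True
  have "\<forall>t<stair_width (n div 4). fst s t < snd s t"
    using assms(1) stair_width_active[OF True] unfolding admissible_def proper_def by blast
  then show ?thesis
    using split_stair_ex1[OF stair_width_pos stair_width_active[OF True] _ assms(3)]
    unfolding active_Suc_stair[OF True] refine_stair[OF True] by blast
next
  case False
  let ?j = "split_coord n"
  have rest: "in_box (active n - {?j}) s x"
    using assms(3) unfolding in_box_def by blast
  have "\<exists>!k. x ?j \<in> {fst (coord_cell n (fst s ?j) (snd s ?j) k)..<snd (coord_cell n (fst s ?j) (snd s ?j) k)}"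
  proof (cases "opening_stage n")
    case True
    then show ?thesis unfolding coord_cell_def using unit_cell_ex1 by simp
  next
    case not_opening: False
    have j: "?j \<in> active n" by (rule split_coord_active[OF False not_opening])
    then have "x ?j \<in> line_points" using assms(2) unfolding active_def by auto
    then have "irrational \<longrightarrow> x ?j \<notin> \<rat>" unfolding line_points_def by auto
    then show ?thesis
      using coord_cell_ex1[OF not_opening] assms(1,3) j unfolding admissible_def in_box_def by simp
  qed
  then show ?thesis
    using set_coord_ex1[OF rest] unfolding active_Suc_split[OF False] refine_split[OF False] by simp
qed

lemma admissible_bounds_seq: "admissible n (bounds_seq f n)"
proof (induction n)
  case 0
  show ?case by (simp add: admissible_def active_def)
qed (simp add: admissible_refine)

lemma mem_box: "x \<in> box n s \<longleftrightarrow> x \<in> PiE I (\<lambda>_. line_points) \<and> in_box (active n) s x"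
  unfolding box_def by simp

lemma bounds_seq_cong: "(\<And>i. i < n \<Longrightarrow> f i = g i) \<Longrightarrow> bounds_seq f n = bounds_seq g n"
  by (induction n) auto

lemma leaf_seq_prefix: "leaf (seq_prefix f n) = box n (bounds_seq f n)"
proof -
  have "bounds_seq (nth (seq_prefix f n)) n = bounds_seq f n"
    by (rule bounds_seq_cong) (simp add: seq_prefix_def)
  then show ?thesis unfolding leaf_def by (simp add: seq_prefix_def)
qed

lemma leaf_snoc:
  "leaf (v @ [k]) = box (Suc (length v)) (refine (length v) (bounds_seq (nth v) (length v)) k)"
proof -
  have "bounds_seq (nth (v @ [k])) (length v) = bounds_seq (nth v) (length v)"
    by (rule bounds_seq_cong) (simp add: nth_append)
  then show ?thesis unfolding leaf_def by simp
qed

lemma leaf_subset_topspace: "leaf v \<subseteq> topspace power"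
  unfolding leaf_def box_def topspace_power by blast

lemma leaf_root: "leaf [] = topspace power"
  unfolding leaf_def box_def topspace_power in_box_def active_def by simp

lemma leaf_eq_Union_sons: "leaf v = (\<Union>k. leaf (v @ [k]))"
proof -
  let ?n = "length v" and ?s = "bounds_seq (nth v) (length v)"
  have split: "in_box (active ?n) ?s x \<longleftrightarrow> (\<exists>k. in_box (active (Suc ?n)) (refine ?n ?s k) x)"
    if "x \<in> PiE I (\<lambda>_. line_points)" for x
    using refine_back[OF admissible_bounds_seq] refine_ex1[OF admissible_bounds_seq that] by blast
  show ?thesis
  proof (rule set_eqI)
    fix x
    show "x \<in> leaf v \<longleftrightarrow> x \<in> (\<Union>k. leaf (v @ [k]))"
      using split[of x] unfolding leaf_snoc unfolding leaf_def by (auto simp: mem_box)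
  qed
qed

lemma leaf_sons_disjoint:
  assumes "k \<noteq> k'"
  shows "leaf (v @ [k]) \<inter> leaf (v @ [k']) = {}"
proof (rule ccontr)
  let ?n = "length v" and ?s = "bounds_seq (nth v) (length v)"
  assume "leaf (v @ [k]) \<inter> leaf (v @ [k']) \<noteq> {}"
  then obtain x where "x \<in> leaf (v @ [k])" "x \<in> leaf (v @ [k'])"
    by blast
  then have x: "x \<in> PiE I (\<lambda>_. line_points)"
    "in_box (active (Suc ?n)) (refine ?n ?s k) x" "in_box (active (Suc ?n)) (refine ?n ?s k') x"
    unfolding leaf_snoc mem_box by simp_all
  have "in_box (active ?n) ?s x"
    by (rule refine_back[OF admissible_bounds_seq x(2)])
  then show False
    using refine_ex1[OF admissible_bounds_seq x(1)] x(2,3) assms by blast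
qed

lemma leaf_locally_strict: "locally_strict leaf"
  unfolding locally_strict_def
proof (intro allI impI conjI)
  fix v
  show "leaf v = (\<Union>s\<in>sons v. leaf s)"
    unfolding sons_eq_range image_image by (rule leaf_eq_Union_sons)
  show "disjoint_family_on leaf (sons v)"
    unfolding disjoint_family_on_def sons_eq_range using leaf_sons_disjoint by auto
qed

lemma box_eq_PiE:
  "box n s = PiE I (\<lambda>j. if j \<in> active n then {fst s j..<snd s j} \<inter> line_points else line_points)"
  unfolding box_def in_box_def active_def by (auto simp: PiE_iff extensional_def split: if_splits)

lemma leaf_open: "open_foliage power leaf"
  unfolding open_foliage_def
proof
  fix v
  let ?n = "length v" and ?s = "bounds_seq (nth v) (length v)"
  have fin: "finite (active ?n)"
    by (rule finite_subset[of _ "{..<?n}"]) (auto simp: active_def)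
  have cell: "openin line ({fst ?s j..<snd ?s j} \<inter> line_points)" for j
    unfolding line_def by (rule openin_subtopology_Int) (rule openin_sorgenfrey_line_atLeastLessThan)
  have whole: "openin line line_points"
    using openin_topspace[of line] by (simp add: topspace_line)
  have "openin power (box ?n ?s)"
    unfolding power_def box_eq_PiE openin_PiE_gen
  proof (intro disjI2 conjI ballI)
    show "finite {j \<in> I. (if j \<in> active ?n then {fst ?s j..<snd ?s j} \<inter> line_points
        else line_points) \<noteq> topspace line}"
      by (rule finite_subset[OF _ fin]) (auto simp: topspace_line)
  qed (simp add: cell whole)
  then show "openin power (leaf v)" unfolding leaf_def .
qed

lemma bounds_seq_proper:
  assumes "j \<in> I" "4 * j < n"
  shows "fst (bounds_seq f n) j < snd (bounds_seq f n) j"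
proof -
  have "j \<in> active n" using assms unfolding active_def by simp
  then show ?thesis
    using admissible_bounds_seq[of n f] unfolding admissible_def proper_def by blast
qed

lemma bounds_seq_nested:
  assumes "j \<in> I" "4 * j < m" "m \<le> n"
  shows "fst (bounds_seq f m) j \<le> fst (bounds_seq f n) j \<and> snd (bounds_seq f n) j \<le> snd (bounds_seq f m) j"
  using assms(3)
proof (induction n rule: dec_induct)
  case (step n)
  have "j \<in> active n" using assms(1,2) step.hyps(1) unfolding active_def by simp
  then have "fst (bounds_seq f n) j \<le> fst (bounds_seq f (Suc n)) j \<and>
      snd (bounds_seq f (Suc n)) j \<le> snd (bounds_seq f n) j"
    using refine_shrinks[OF admissible_bounds_seq] by simp
  with step.IH show ?case by (metis order.trans)
qed simp

lemma bounds_seq_opening: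
  assumes "j \<in> I"
  shows "snd (bounds_seq f (Suc (4 * j))) j - fst (bounds_seq f (Suc (4 * j))) j = 1"
proof -
  have "opening_stage (4 * j)" "split_coord (4 * j) = j"
    using assms unfolding opening_stage_def split_coord_def by simp_all
  then show ?thesis
    by (simp add: refine_split coord_cell_def unit_cell_def)
qed

lemma bounds_seq_halving:
  assumes "j \<in> I" "n = 4 * prod_encode (j, k) + 1"
  shows "snd (bounds_seq f (Suc n)) j < snd (bounds_seq f n) j"
    and "snd (bounds_seq f (Suc n)) j - fst (bounds_seq f (Suc n)) j
      \<le> (snd (bounds_seq f n) j - fst (bounds_seq f n) j) / 2"
proof -
  let ?a = "fst (bounds_seq f n) j" and ?b = "snd (bounds_seq f n) j"
  have "j \<le> prod_encode (j, k)" by (rule le_prod_encode_1)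
  then have "4 * j < n" using assms(2) by simp
  then have ab: "?a < ?b" by (rule bounds_seq_proper[OF assms(1)])
  have "(4 * e + 1) mod 4 = 1 \<and> (4 * e + 1) div 4 = e" for e :: nat by presburger
  then have n: "n mod 4 = 1" "n div 4 = prod_encode (j, k)" using assms(2) by simp_all
  have "\<not> opening_stage n" "split_coord n = j"
    using n coord_code_prod_encode[OF assms(1)] unfolding opening_stage_def split_coord_def by simp_all
  then have "bounds_seq f (Suc n) = set_coord j (dyadic_cell ?a ?b (f n)) (bounds_seq f n)"
    using n by (simp add: refine_split coord_cell_def)
  then show "snd (bounds_seq f (Suc n)) j < ?b"
    and "snd (bounds_seq f (Suc n)) j - fst (bounds_seq f (Suc n)) j \<le> (?b - ?a) / 2"
    using dyadic_cell_bounds[OF ab, of "f n"] dyadic_cell_halves[OF ab, of "f n"] by simp_all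
qed

lemma bounds_seq_avoiding:
  assumes "irrational" "j \<in> I" "n = 4 * prod_encode (j, k) + 2"
  shows "fst (bounds_seq f n) j < fst (bounds_seq f (Suc n)) j"
    and "rat_enum k \<le> fst (bounds_seq f (Suc n)) j \<or> snd (bounds_seq f (Suc n)) j \<le> rat_enum k"
proof -
  let ?a = "fst (bounds_seq f n) j" and ?b = "snd (bounds_seq f n) j"
  have "j \<le> prod_encode (j, k)" by (rule le_prod_encode_1)
  then have "4 * j < n" using assms(3) by simp
  then have ab: "?a < ?b" by (rule bounds_seq_proper[OF assms(2)])
  have "(4 * e + 2) mod 4 = 2 \<and> (4 * e + 2) div 4 = e" for e :: nat by presburger
  then have n: "n mod 4 = 2" "n div 4 = prod_encode (j, k)" using assms(3) by simp_all
  have "\<not> opening_stage n" "split_coord n = j"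
    using n coord_code_prod_encode[OF assms(2)] unfolding opening_stage_def split_coord_def by simp_all
  moreover have "coord_cell n a b c = avoiding_cell a b (rat_enum k) c" for a b c
    using \<open>\<not> opening_stage n\<close> n assms(1) unfolding coord_cell_def by simp
  ultimately have "bounds_seq f (Suc n) = set_coord j (avoiding_cell ?a ?b (rat_enum k) (f n)) (bounds_seq f n)"
    using n by (simp add: refine_split)
  then show "?a < fst (bounds_seq f (Suc n)) j"
    and "rat_enum k \<le> fst (bounds_seq f (Suc n)) j \<or> snd (bounds_seq f (Suc n)) j \<le> rat_enum k"
    using avoiding_cell_bounds[OF ab, of "rat_enum k" "f n"] avoiding_cell_avoids[OF ab, of "rat_enum k" "f n"]
    by simp_all
qed

lemma bounds_seq_width_small:
  assumes "j \<in> I"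
  shows "\<exists>D>4 * j. \<forall>f n. D \<le> n \<longrightarrow> snd (bounds_seq f n) j - fst (bounds_seq f n) j \<le> (1/2) ^ k"
proof (induction k)
  case 0
  show ?case
  proof (intro exI[of _ "Suc (4 * j)"] conjI allI impI)
    fix f n assume "Suc (4 * j) \<le> n"
    then show "snd (bounds_seq f n) j - fst (bounds_seq f n) j \<le> (1/2) ^ 0"
      using bounds_seq_nested[OF assms _ \<open>Suc (4 * j) \<le> n\<close>, of f] bounds_seq_opening[OF assms, of f]
      by simp
  qed simp
next
  case (Suc k)
  then obtain D where D: "D > 4 * j"
    "\<And>f n. D \<le> n \<Longrightarrow> snd (bounds_seq f n) j - fst (bounds_seq f n) j \<le> (1/2) ^ k"
    by blast
  define m where "m = 4 * prod_encode (j, D) + 1"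
  have "D \<le> prod_encode (j, D)" by (rule le_prod_encode_2)
  then have Dm: "D \<le> m" "4 * j < m" using D(1) unfolding m_def by simp_all
  show ?case
  proof (intro exI[of _ "Suc m"] conjI allI impI)
    fix f n assume "Suc m \<le> n"
    have "snd (bounds_seq f n) j - fst (bounds_seq f n) j
        \<le> snd (bounds_seq f (Suc m)) j - fst (bounds_seq f (Suc m)) j"
      using bounds_seq_nested[OF assms _ \<open>Suc m \<le> n\<close>, of f] Dm by simp
    also have "\<dots> \<le> (snd (bounds_seq f m) j - fst (bounds_seq f m) j) / 2"
      by (rule bounds_seq_halving(2)[OF assms m_def])
    also have "\<dots> \<le> (1/2) ^ k / 2"
      using D(2)[OF Dm(1), of f] by simp
    finally show "snd (bounds_seq f n) j - fst (bounds_seq f n) j \<le> (1/2) ^ Suc k"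
      by simp
  qed (use Dm in simp)
qed

lemma coord_limit_unique:
  assumes "j \<in> I"
  shows "\<exists>!y. \<forall>n>4 * j. y \<in> {fst (bounds_seq f n) j..<snd (bounds_seq f n) j}"
proof -
  let ?A = "\<lambda>n. fst (bounds_seq f n) j" and ?B = "\<lambda>n. snd (bounds_seq f n) j"
  have nested: "?A n \<le> ?A (Suc n) \<and> ?B (Suc n) \<le> ?B n \<and> ?A n < ?B n" if "n \<ge> Suc (4 * j)" for n
    using bounds_seq_nested[OF assms, of n "Suc n" f] bounds_seq_proper[OF assms, of n f] that by simp
  have small: "\<exists>n\<ge>Suc (4 * j). ?B n - ?A n < e" if e: "e > 0" for e
  proof -
    obtain k where k: "(1/2::real) ^ k < e"
      using real_arch_pow_inv[OF e, of "1/2"] by auto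
    obtain D where "D > 4 * j" "\<And>f n. D \<le> n \<Longrightarrow> snd (bounds_seq f n) j - fst (bounds_seq f n) j \<le> (1/2) ^ k"
      using bounds_seq_width_small[OF assms, of k] by blast
    then have "?B D - ?A D \<le> (1/2) ^ k" by blast
    then show ?thesis
      using \<open>D > 4 * j\<close> k by (intro exI[of _ D] conjI) simp_all
  qed
  have right_decreasing: "\<exists>m>n. ?B m < ?B n" if "n \<ge> Suc (4 * j)" for n
  proof -
    define m where "m = 4 * prod_encode (j, n) + 1"
    have "n \<le> prod_encode (j, n)" by (rule le_prod_encode_2)
    then have "n \<le> m" unfolding m_def by simp
    then have "?B m \<le> ?B n" using bounds_seq_nested[OF assms _ \<open>n \<le> m\<close>, of f] that by simp
    then have "?B (Suc m) < ?B n" using bounds_seq_halving(1)[OF assms m_def, of f] by simp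
    then show ?thesis using \<open>n \<le> m\<close> by (intro exI[of _ "Suc m"]) simp
  qed
  have "\<exists>!y. \<forall>n\<ge>Suc (4 * j). ?A n \<le> y \<and> y < ?B n"
    by (rule nested_intervals_unique_point[OF nested small right_decreasing])
  then show ?thesis by (simp add: Suc_le_eq)
qed

lemma coord_limit_above:
  assumes "irrational" "j \<in> I" "\<forall>n>4 * j. y \<in> {fst (bounds_seq f n) j..<snd (bounds_seq f n) j}"
    and "4 * j < n"
  shows "fst (bounds_seq f n) j < y"
proof -
  define m where "m = 4 * prod_encode (j, n) + 2"
  have "n \<le> prod_encode (j, n)" by (rule le_prod_encode_2)
  then have "n \<le> m" unfolding m_def by simp
  have "fst (bounds_seq f n) j \<le> fst (bounds_seq f m) j"
    using bounds_seq_nested[OF assms(2,4) \<open>n \<le> m\<close>] by simp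
  also have "\<dots> < fst (bounds_seq f (Suc m)) j"
    by (rule bounds_seq_avoiding(1)[OF assms(1,2) m_def])
  also have "\<dots> \<le> y"
  proof -
    have "4 * j < Suc m" using assms(4) \<open>n \<le> m\<close> by simp
    then have "y \<in> {fst (bounds_seq f (Suc m)) j..<snd (bounds_seq f (Suc m)) j}"
      using assms(3) by blast
    then show ?thesis by simp
  qed
  finally show ?thesis .
qed

lemma coord_limit_in_line_points:
  assumes "j \<in> I" "\<forall>n>4 * j. y \<in> {fst (bounds_seq f n) j..<snd (bounds_seq f n) j}"
  shows "y \<in> line_points"
proof (cases irrational)
  case True
  have "y \<noteq> q" if q: "q \<in> \<rat>" for q
  proof -
    obtain k where k: "rat_enum k = q" using rat_enum_surj[OF q] by blast
    define m where "m = 4 * prod_encode (j, k) + 2"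
    have "j \<le> prod_encode (j, k)" by (rule le_prod_encode_1)
    then have "4 * j < Suc m" unfolding m_def by simp
    have "fst (bounds_seq f (Suc m)) j < y"
      by (rule coord_limit_above[OF True assms \<open>4 * j < Suc m\<close>])
    moreover have "y \<in> {fst (bounds_seq f (Suc m)) j..<snd (bounds_seq f (Suc m)) j}"
      using assms(2) \<open>4 * j < Suc m\<close> by blast
    ultimately have "fst (bounds_seq f (Suc m)) j < y" "y < snd (bounds_seq f (Suc m)) j"
      by simp_all
    moreover have "q \<le> fst (bounds_seq f (Suc m)) j \<or> snd (bounds_seq f (Suc m)) j \<le> q"
      using bounds_seq_avoiding(2)[OF True assms(1) m_def] k by simp
    ultimately show ?thesis by auto
  qed
  then show ?thesis using True unfolding line_points_def by auto
next
  case False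
  then show ?thesis unfolding line_points_def by simp
qed

lemma branch_box_singleton: "\<exists>p. (\<Inter>n. box n (bounds_seq f n)) = {p}"
proof -
  let ?P = "\<lambda>j y. \<forall>n>4 * j. y \<in> {fst (bounds_seq f n) j..<snd (bounds_seq f n) j}"
  define Y where "Y j = (THE y. ?P j y)" for j
  have Y: "?P j (Y j)" if "j \<in> I" for j
    unfolding Y_def using theI'[OF coord_limit_unique[OF that]] .
  have Y_unique: "y = Y j" if "j \<in> I" "?P j y" for j y
    unfolding Y_def using the1_equality[OF coord_limit_unique[OF that(1)] that(2)] by simp
  have mem: "x \<in> (\<Inter>n. box n (bounds_seq f n)) \<longleftrightarrow> x \<in> PiE I (\<lambda>_. line_points) \<and> (\<forall>j\<in>I. ?P j (x j))" for x
    unfolding box_def in_box_def active_def by auto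
  have "(\<Inter>n. box n (bounds_seq f n)) = {restrict Y I}"
  proof (intro equalityI subsetI)
    fix x assume "x \<in> (\<Inter>n. box n (bounds_seq f n))"
    then have x: "x \<in> PiE I (\<lambda>_. line_points)" "\<forall>j\<in>I. ?P j (x j)" using mem by blast+
    have "x j = restrict Y I j" for j
    proof (cases "j \<in> I")
      case True then show ?thesis using x(2) Y_unique by simp
    next
      case False then show ?thesis using x(1) by (simp add: PiE_def extensional_def)
    qed
    then show "x \<in> {restrict Y I}" by auto
  next
    fix x assume "x \<in> {restrict Y I}"
    then show "x \<in> (\<Inter>n. box n (bounds_seq f n))"
      unfolding mem using Y coord_limit_in_line_points[OF _ Y] by auto
  qed
  then show ?thesis by blast
qed

lemma leaf_strict_branches: "strict_branches leaf"
  unfolding strict_branches_def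
proof (intro allI impI)
  fix B assume "branch B"
  then obtain f where B: "B = range (seq_prefix f)"
    using branch_eq_range_seq_prefix by blast
  have "(\<Inter>x\<in>B. leaf x) = (\<Inter>n. box n (bounds_seq f n))"
    unfolding B image_image leaf_seq_prefix ..
  then show "\<exists>p. (\<Inter>x\<in>B. leaf x) = {p}"
    using branch_box_singleton[of f] by simp
qed

lemma leaf_nonempty: "leaf v \<noteq> {}"
proof -
  define f where "f i = (if i < length v then v ! i else 0)" for i
  have "v = seq_prefix f (length v)"
    by (rule nth_equalityI) (simp_all add: seq_prefix_def f_def)
  then have "leaf v = box (length v) (bounds_seq f (length v))"
    using leaf_seq_prefix by metis
  moreover obtain p where "(\<Inter>n. box n (bounds_seq f n)) = {p}"
    using branch_box_singleton by blast
  ultimately show ?thesis by blast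
qed

lemma leaf_exists:
  assumes "p \<in> topspace power"
  shows "\<exists>v. length v = n \<and> p \<in> leaf v"
proof (induction n)
  case 0
  then show ?case using assms leaf_root by (intro exI[of _ "[]"]) simp
next
  case (Suc n)
  then obtain v where v: "length v = n" "p \<in> leaf v" by blast
  then obtain k where "p \<in> leaf (v @ [k])" using leaf_eq_Union_sons[of v] by blast
  then show ?case using v(1) by (intro exI[of _ "v @ [k]"]) simp
qed

lemma leaf_thin:
  assumes "j \<in> I" "\<epsilon> > 0"
  shows "\<exists>D. \<forall>v x y. D \<le> length v \<longrightarrow> x \<in> leaf v \<longrightarrow> y \<in> leaf v \<longrightarrow> x j < y j + \<epsilon>"
proof -
  obtain k where k: "(1/2::real) ^ k < \<epsilon>"
    using real_arch_pow_inv[OF assms(2), of "1/2"] by auto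
  obtain D where D: "D > 4 * j"
    "\<And>f n. D \<le> n \<Longrightarrow> snd (bounds_seq f n) j - fst (bounds_seq f n) j \<le> (1/2) ^ k"
    using bounds_seq_width_small[OF assms(1), of k] by blast
  have "x j < y j + \<epsilon>" if "D \<le> length v" "x \<in> leaf v" "y \<in> leaf v" for v x y
  proof -
    let ?s = "bounds_seq (nth v) (length v)"
    have "j \<in> active (length v)"
      using assms(1) D(1) that(1) unfolding active_def by simp
    then have "x j < snd ?s j" "fst ?s j \<le> y j"
      using that(2,3) unfolding leaf_def mem_box in_box_def by auto
    moreover have "snd ?s j - fst ?s j \<le> (1/2) ^ k"
      using D(2)[OF that(1)] .
    ultimately show ?thesis using k by linarith
  qed
  then show ?thesis by blast
qed

lemma stair_sons_above:
  assumes "n mod 4 = 3" "length z = n" "p \<in> leaf z"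
  shows "\<exists>M. \<forall>k\<ge>M * stair_width (n div 4). \<forall>x\<in>leaf (z @ [k]). \<forall>t<stair_width (n div 4). p t < x t"
proof -
  let ?r = "stair_width (n div 4)" and ?s = "bounds_seq (nth z) n"
  have sub: "{..<?r} \<subseteq> active n" by (rule stair_width_active[OF assms(1)])
  have ab: "fst ?s t < snd ?s t" if "t < ?r" for t
    using admissible_bounds_seq[of n "nth z"] sub that unfolding admissible_def proper_def by blast
  have p: "p t < snd ?s t" if "t < ?r" for t
    using assms(2,3) sub that unfolding leaf_def mem_box in_box_def by auto
  have "\<forall>t\<in>{..<?r}. \<exists>m. p t < dyadic_up (fst ?s t) (snd ?s t) m"
    using dyadic_up_unbounded ab p by blast
  then obtain m where m: "\<forall>t\<in>{..<?r}. p t < dyadic_up (fst ?s t) (snd ?s t) (m t)"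
    by (rule bchoice[THEN exE])
  define M where "M = Max (m ` {..<?r})"
  have "p t < x t" if k: "M * ?r \<le> k" and x: "x \<in> leaf (z @ [k])" and t: "t < ?r" for k x t
  proof -
    have "M \<le> k div ?r"
      using div_le_mono[OF k, of ?r] stair_width_pos by simp
    moreover have "m t \<le> M" unfolding M_def using t by simp
    ultimately have "dyadic_up (fst ?s t) (snd ?s t) (m t) \<le> dyadic_up (fst ?s t) (snd ?s t) (k div ?r)"
      using dyadic_up_le_iff[OF ab[OF t]] by simp
    also have "\<dots> \<le> fst (split_stair ?r k ?s) t"
      using split_stair_bounds[OF ab[OF t] t] by simp
    also have "\<dots> \<le> x t"
    proof -
      have "x \<in> box (Suc n) (split_stair ?r k ?s)"
        using x leaf_snoc[of z k] refine_stair[OF assms(1)] assms(2) by simp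
      then show ?thesis
        using sub t unfolding mem_box in_box_def active_Suc_stair[OF assms(1)] by auto
    qed
    finally have "dyadic_up (fst ?s t) (snd ?s t) (m t) \<le> x t" .
    moreover have "p t < dyadic_up (fst ?s t) (snd ?s t) (m t)"
      using m t by simp
    ultimately show ?thesis by linarith
  qed
  then show ?thesis by blast
qed

lemma openin_line_right_interval:
  assumes "openin line W" "x \<in> W"
  shows "\<exists>e>0. {x..<x + e} \<inter> line_points \<subseteq> W"
proof -
  obtain T where T: "openin sorgenfrey_line T" "W = T \<inter> line_points"
    using assms(1) unfolding line_def openin_subtopology by blast
  then obtain e where "e > 0" "{x..<x + e} \<subseteq> T"
    using openin_sorgenfrey_line_right_interval[OF T(1)] assms(2) by blast
  then show ?thesis using T(2) by blast
qed

lemma neighbourhood_contains_box: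
  assumes "neighbourhood power U p"
  shows "\<exists>K \<epsilon>. finite K \<and> K \<subseteq> I \<and> \<epsilon> > 0 \<and> {x \<in> topspace power. \<forall>i\<in>K. p i \<le> x i \<and> x i < p i + \<epsilon>} \<subseteq> U"
proof -
  obtain V where V: "openin power V" "p \<in> V" "V \<subseteq> U"
    using assms unfolding neighbourhood_def by blast
  have "\<forall>x\<in>V. \<exists>W. finite {i \<in> I. W i \<noteq> topspace line} \<and> (\<forall>i\<in>I. openin line (W i))
      \<and> x \<in> PiE I W \<and> PiE I W \<subseteq> V"
    using V(1) unfolding power_def openin_product_topology_alt .
  then obtain W where W: "finite {i \<in> I. W i \<noteq> topspace line}" "\<forall>i\<in>I. openin line (W i)"
      "p \<in> PiE I W" "PiE I W \<subseteq> V"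
    using V(2) by blast
  define K where "K = {i \<in> I. W i \<noteq> line_points}"
  have "finite K" using W(1) unfolding K_def topspace_line .
  have "\<forall>i\<in>K. \<exists>e>0. {p i..<p i + e} \<inter> line_points \<subseteq> W i"
  proof
    fix i assume "i \<in> K"
    then have "i \<in> I" unfolding K_def by blast
    then show "\<exists>e>0. {p i..<p i + e} \<inter> line_points \<subseteq> W i"
      using openin_line_right_interval W(2) PiE_mem[OF W(3)] by blast
  qed
  then obtain eps where eps: "\<forall>i\<in>K. eps i > 0 \<and> {p i..<p i + eps i} \<inter> line_points \<subseteq> W i"
    by (rule bchoice[THEN exE])
  define \<epsilon> where "\<epsilon> = Min (insert 1 (eps ` K))"
  have "\<epsilon> > 0"
    unfolding \<epsilon>_def using \<open>finite K\<close> eps by (subst Min_gr_iff) auto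
  have \<epsilon>_le: "\<epsilon> \<le> eps i" if "i \<in> K" for i
    unfolding \<epsilon>_def using \<open>finite K\<close> that by (intro Min_le) auto
  have box_W: "{x \<in> topspace power. \<forall>i\<in>K. p i \<le> x i \<and> x i < p i + \<epsilon>} \<subseteq> PiE I W"
  proof
    fix x assume x: "x \<in> {x \<in> topspace power. \<forall>i\<in>K. p i \<le> x i \<and> x i < p i + \<epsilon>}"
    then have x_line: "x \<in> PiE I (\<lambda>_. line_points)" unfolding topspace_power by blast
    show "x \<in> PiE I W"
    proof (rule PiE_I)
      fix i assume i: "i \<in> I"
      show "x i \<in> W i"
      proof (cases "i \<in> K")
        case True
        then have "p i \<le> x i" "x i < p i + \<epsilon>"
          using x by auto
        moreover have "x i \<in> line_points"
          using x_line i by auto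
        ultimately have "x i \<in> {p i..<p i + eps i} \<inter> line_points"
          using \<epsilon>_le[OF True] by auto
        then show ?thesis using eps True by blast
      next
        case False
        then show ?thesis using x_line i unfolding K_def by auto
      qed
    next
      fix i assume "i \<notin> I"
      then show "x i = undefined" using x_line by (auto simp: PiE_def extensional_def)
    qed
  qed
  show ?thesis
  proof (intro exI conjI)
    show "K \<subseteq> I" unfolding K_def by blast
    show "{x \<in> topspace power. \<forall>i\<in>K. p i \<le> x i \<and> x i < p i + \<epsilon>} \<subseteq> U"
      using box_W W(4) V(3) by (meson order.trans)
  qed fact+
qed

lemma far_sons_near_point:
  assumes p: "p \<in> topspace power" and K: "finite K" "K \<subseteq> I" "\<epsilon> > 0"
  shows "\<exists>z N. p \<in> leaf z \<and> (\<forall>k\<ge>N. \<forall>x\<in>leaf (z @ [k]). \<forall>i\<in>K. p i \<le> x i \<and> x i < p i + \<epsilon>)"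
proof -
  have "\<forall>i\<in>K. \<exists>D. \<forall>v x y. D \<le> length v \<longrightarrow> x \<in> leaf v \<longrightarrow> y \<in> leaf v \<longrightarrow> x i < y i + \<epsilon>"
    using leaf_thin K(2,3) by blast
  then obtain D where D: "\<forall>i\<in>K. \<forall>v x y. D i \<le> length v \<longrightarrow> x \<in> leaf v \<longrightarrow> y \<in> leaf v \<longrightarrow> x i < y i + \<epsilon>"
    by (rule bchoice[THEN exE])
  define e where "e = Max (insert 0 (D ` K \<union> K))"
  define n where "n = 4 * e + 3"
  have "n mod 4 = 3" "n div 4 = e" unfolding n_def by presburger+
  have e: "D i \<le> e" "i \<le> e" if "i \<in> K" for i
    unfolding e_def using K(1) that by (auto intro: Max_ge)
  have K_stair: "K \<subseteq> {..<stair_width e}"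
    using I_Int_atMost[of e] K(2) e(2) by blast
  obtain z where z: "length z = n" "p \<in> leaf z"
    using leaf_exists[OF p] by blast
  obtain M where M: "\<forall>k\<ge>M * stair_width e. \<forall>x\<in>leaf (z @ [k]). \<forall>t<stair_width e. p t < x t"
    using stair_sons_above[OF \<open>n mod 4 = 3\<close> z] \<open>n div 4 = e\<close> by auto
  have "p i \<le> x i \<and> x i < p i + \<epsilon>" if k: "M * stair_width e \<le> k" and x: "x \<in> leaf (z @ [k])"
    and i: "i \<in> K" for k x i
  proof
    show "p i \<le> x i" using M k x K_stair i by force
    have "x \<in> leaf z"
      using x leaf_eq_Union_sons[of z] by blast
    moreover have "D i \<le> length z"
      using e(1)[OF i] z(1) unfolding n_def by simp
    ultimately show "x i < p i + \<epsilon>" using D i z(2) by blast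
  qed
  then show ?thesis using z(2) by blast
qed

lemma leaf_grows_into: "grows_into power leaf"
  unfolding grows_into_def
proof (intro ballI allI impI)
  fix p U assume p: "p \<in> topspace power" and U: "neighbourhood power U p"
  obtain K \<epsilon> where K: "finite K" "K \<subseteq> I" "\<epsilon> > 0"
    and U_box: "{x \<in> topspace power. \<forall>i\<in>K. p i \<le> x i \<and> x i < p i + \<epsilon>} \<subseteq> U"
    using neighbourhood_contains_box[OF U] by blast
  obtain z N where z: "p \<in> leaf z"
    and N: "\<forall>k\<ge>N. \<forall>x\<in>leaf (z @ [k]). \<forall>i\<in>K. p i \<le> x i \<and> x i < p i + \<epsilon>"
    using far_sons_near_point[OF p K] by blast
  define G where "G = (\<Union>k\<in>{N..}. leaf (z @ [k]))"
  have "G \<subseteq> U"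
    using N U_box leaf_subset_topspace unfolding G_def by blast
  moreover have "G \<noteq> {}"
    unfolding G_def using leaf_nonempty[of "z @ [N]"] by auto
  moreover have "G \<in> shoot leaf z"
    unfolding G_def by (rule Union_sons_from_in_shoot)
  moreover have "z \<in> scope leaf p"
    unfolding scope_def using z by simp
  ultimately show "\<exists>z\<in>scope leaf p. shoot leaf z \<ggreater> {U}"
    unfolding refines_def by blast
qed

theorem has_pi_tree_power: "has_pi_tree power"
  unfolding has_pi_tree_def pi_tree_def baire_foliage_tree_def
  using leaf_open leaf_locally_strict leaf_strict_branches leaf_root leaf_grows_into by blast

end

lemma has_pi_tree_sorgenfrey_power:
  fixes I :: "nat set"
  assumes "I = UNIV \<or> (\<exists>n\<ge>1. I = {..<n})"
  shows "has_pi_tree (product_topology (\<lambda>_. sorgenfrey_line) I)"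
    and "has_pi_tree (product_topology (\<lambda>_. irrational_sorgenfrey_line) I)"
proof -
  interpret R: sorgenfrey_power False I by (unfold_locales) (rule assms)
  interpret Q: sorgenfrey_power True I by (unfold_locales) (rule assms)
  show "has_pi_tree (product_topology (\<lambda>_. sorgenfrey_line) I)"
    using R.has_pi_tree_power unfolding R.power_def R.line_def R.line_points_def by simp
  show "has_pi_tree (product_topology (\<lambda>_. irrational_sorgenfrey_line) I)"
    using Q.has_pi_tree_power unfolding Q.power_def Q.line_def Q.line_points_def irrational_sorgenfrey_line_def
    by simp
qed

theorem corollary21:
  shows "(\<forall>n::nat. n \<ge> 1 \<longrightarrow>
            has_pi_tree (fin_power sorgenfrey_line n) \<and>
            has_pi_tree (fin_power irrational_sorgenfrey_line n))
       \<and> has_pi_tree (omega_power sorgenfrey_line)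
       \<and> has_pi_tree (omega_power irrational_sorgenfrey_line)"
  unfolding fin_power_def omega_power_def using has_pi_tree_sorgenfrey_power by blast

end
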